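(* Let $B$ be a finite set of vincular patterns, let $p\in S_k$ be a prefix pattern and let $\vec v\in\mathbb{N}^{k+1}$. Suppose every permutation $\pi\in A(p,\vec v)$ contains a copy of some $(\sigma,X)\in B$ such that all positions of the head of that copy lie in $\{1,\dots,k\}$ (i.e. the letters of the copy corresponding to the head of $(\sigma,X)$ are among $\pi_1\cdots\pi_k$). Then $\vec v$ is a gap vector for $p$ with respect to $B$.
   Context: For a word $w$ of distinct integers, $\mathrm{red}(w)$ replaces the $i$-th smallest letter by $i$; $u\sim w$ means $\mathrm{red}(u)=\mathrm{red}(w)$. A vincular pattern of length $\ell$ is a pair $(\sigma,X)$ with $\sigma\in S_\ell$ and $X\subseteq[\ell-1]$. A permutation $\pi\in S_n$ contains $(\sigma,X)$ if there are indices $i_1<\dots<i_\ell$ with $\mathrm{red}(\pi_{i_1}\cdots\pi_{i_\ell})=\sigma$ and $i_{x+1}=i_x+1$ for every $x\in X$; the subsequence $\pi_{i_1}\cdots\pi_{i_\ell}$ is a copy. $\pi$ avoids a set $B$ of such patterns if it contains none of them. The head of $(\sigma,X)$ is the pattern formed by its first $m+1$ letters, $(\mathrm{red}(\sigma_1\cdots\sigma_{m+1}),X)$, where $m=\max X$ ($m=0$ if $X=\emptyset$). For a word $w\in[n]^k$ with distinct letters, let $c_i$ be its $i$-th smallest letter, $c_0=0$, $c_{k+1}=n+1$; the spacing vector $\vec g(n,w)\in\mathbb{N}^{k+1}$ has $i$-th component $c_i-c_{i-1}-1$. For $p\in S_k$ and such $w$ with $\mathrm{red}(w)=p$, let $S_n^B(p;w)$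 be the set of $B$-avoiding $\pi\in S_n$ with $\pi_i=w_i$ for $1\le i\le k$. A vector $\vec v\in\mathbb{N}^{k+1}$ is a gap vector for $p$ with respect to $B$ if for every $n$ and every such $w$ with $\vec g(n,w)\ge\vec v$ (componentwise), $S_n^B(p;w)=\emptyset$. Finally, $A(p,\vec v)$ is the set of permutations $\pi\in S_{k+|\vec v|}$ (where $|\vec v|$ is the sum of the components) with $\pi_1\cdots\pi_k\sim p$ and $\vec g(k+|\vec v|,\pi_1\cdots\pi_k)=\vec v$. *)

theory Defs
  imports Main "HOL-Combinatorics.Multiset_Permutations"
begin

(* Permutations of S_n are lists that are arrangements of {1..n}
   (library notion permutations_of_set). Words are nat lists;
   list positions are 0-indexed internally. *)

type_synonym vpattern = "nat list \<times> nat set"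

definition red :: "nat list \<Rightarrow> nat list" where
  "red w = map (\<lambda>x. card {y \<in> set w. y \<le> x}) w"

definition valid_vpattern :: "vpattern \<Rightarrow> bool" where
  "valid_vpattern P = (fst P \<in> permutations_of_set {1..length (fst P)}
                       \<and> snd P \<subseteq> {1..<length (fst P)})"

(* idx j (0-indexed j < l) is the (0-indexed) position of the (j+1)-st letter
   of a copy of (sigma, X) in pi *)
definition copy_at :: "nat list \<Rightarrow> vpattern \<Rightarrow> (nat \<Rightarrow> nat) \<Rightarrow> bool" where
  "copy_at \<pi> P idx =
     (let \<sigma> = fst P; X = snd P; l = length \<sigma> in
       (\<forall>j. Suc j < l \<longrightarrow> idx j < idx (Suc j)) \<and>
       (\<forall>j<l. idx j < length \<pi>) \<and>
       red (map (\<lambda>j. \<pi> ! idx j) [0..<l]) = \<sigma> \<and>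
       (\<forall>x\<in>X. idx x = Suc (idx (x - 1))))"

definition contains :: "nat list \<Rightarrow> vpattern \<Rightarrow> bool" where
  "contains \<pi> P = (\<exists>idx. copy_at \<pi> P idx)"

definition avoids :: "nat list \<Rightarrow> vpattern set \<Rightarrow> bool" where
  "avoids \<pi> B = (\<forall>P\<in>B. \<not> contains \<pi> P)"

(* m = max X (0 if X empty); the head consists of the first m+1 letters,
   i.e. 0-indexed letters 0..m; its last letter has 0-indexed index m *)
definition head_last :: "nat set \<Rightarrow> nat" where
  "head_last X = (if X = {} then 0 else Max X)"

definition gapvec :: "nat \<Rightarrow> nat list \<Rightarrow> nat list" where
  "gapvec n w = (let c = 0 # sort w @ [Suc n] in
                  map (\<lambda>i. c ! Suc i - c ! i - 1) [0..<Suc (length w)])"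

definition S_restr :: "nat \<Rightarrow> vpattern set \<Rightarrow> nat list \<Rightarrow> nat list \<Rightarrow> nat list set" where
  "S_restr n B p w = {\<pi> \<in> permutations_of_set {1..n}. avoids \<pi> B \<and> take (length p) \<pi> = w}"

definition gap_vector :: "nat list \<Rightarrow> vpattern set \<Rightarrow> nat list \<Rightarrow> bool" where
  "gap_vector p B v =
     (\<forall>n w. length w = length p \<and> distinct w \<and> set w \<subseteq> {1..n} \<and> red w = p \<and>
            list_all2 (\<le>) v (gapvec n w) \<longrightarrow> S_restr n B p w = {})"

definition A_set :: "nat list \<Rightarrow> nat list \<Rightarrow> nat list set" where
  "A_set p v = {\<pi> \<in> permutations_of_set {1..length p + sum_list v}.
                  red (take (length p) \<pi>) = red p \<and>
                  gapvec (length p + sum_list v) (take (length p) \<pi>) = v}"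

end

theory Submission
  imports Defs
begin

(* Let \<pi> \<in> S_n(p; w) avoid B, where the spacing vector of w dominates v.
   Choose a set T of letters outside w with exactly v_i letters in the i-th gap of w, and
   let \<pi>' be the reduction of the subsequence of \<pi> formed by the letters of w and T.
   The first k letters of this subsequence are w itself, and the gaps of w counted inside
   it are the v_i, so \<pi>' \<in> A(p, v).  By hypothesis \<pi>' contains a copy of some pattern
   in B whose head lies among its first k positions.  Since the subsequence agrees with \<pi>
   on these positions, every adjacency requirement of the pattern, all of which concern
   the head, is still met in \<pi>; the order conditions survive in any subsequence.  So \<pi>
   contains the pattern, a contradiction. *)

definition rk :: "nat set \<Rightarrow> nat \<Rightarrow> nat" where
  "rk A x = card {y\<in>A. y \<le> x}"

lemma red_rk: "red w = map (rk (set w)) w"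
  by (simp add: red_def rk_def)

lemma rk_strict_mono: "finite A \<Longrightarrow> strict_mono_on A (rk A)"
proof (rule strict_mono_onI)
  fix x y assume "finite A" "x \<in> A" "y \<in> A" "x < y"
  then have "{z\<in>A. z \<le> x} \<subset> {z\<in>A. z \<le> y}" by force
  then show "rk A x < rk A y" unfolding rk_def using \<open>finite A\<close>
    by (intro psubset_card_mono) auto
qed

lemma rk_image: assumes "finite A" shows "rk A ` A = {1..card A}"
proof -
  have inj: "inj_on (rk A) A" using rk_strict_mono[OF assms] by (rule strict_mono_on_imp_inj_on)
  have "rk A ` A \<subseteq> {1..card A}"
    using assms unfolding rk_def by (auto intro!: card_mono Suc_leI card_gt_0_iff[THEN iffD2])
  moreover have "card (rk A ` A) = card {1..card A}" using card_image[OF inj] by simp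
  ultimately show ?thesis by (intro card_subset_eq) auto
qed

lemma red_map_strict_mono:
  assumes "strict_mono_on A g" "set w \<subseteq> A"
  shows "red (map g w) = red w"
proof -
  have inj: "inj_on g A" using assms(1) by (rule strict_mono_on_imp_inj_on)
  have "card {y \<in> g ` set w. y \<le> g x} = card {y\<in>set w. y \<le> x}" if x: "x \<in> set w" for x
  proof -
    have "{y \<in> g ` set w. y \<le> g x} = g ` {y\<in>set w. y \<le> x}"
      using x assms strict_mono_on_less_eq[OF assms(1)] by (auto simp: image_iff subset_iff)
    moreover have "inj_on g {y\<in>set w. y \<le> x}" using inj assms(2) by (auto intro: inj_on_subset)
    ultimately show ?thesis by (simp add: card_image)
  qed
  then show ?thesis by (simp add: red_def)
qed

lemma red_perm:
  assumes "distinct s" shows "red s \<in> permutations_of_set {1..length s}"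
proof -
  have "inj_on (rk (set s)) (set s)" by (intro strict_mono_on_imp_inj_on rk_strict_mono) simp
  then show ?thesis unfolding red_rk permutations_of_set_def
    using rk_image[of "set s"] distinct_card[OF assms] assms by (auto simp: distinct_map)
qed

lemma red_id: assumes "p \<in> permutations_of_set {1..k}" shows "red p = p"
proof -
  have s: "set p = {1..k}" using assms by (simp add: permutations_of_set_def)
  have "rk {1..k} x = x" if "x \<in> {1..k}" for x
  proof -
    have "{y\<in>{1..k}. y \<le> x} = {1..x}" using that by auto
    then show ?thesis by (simp add: rk_def)
  qed
  then show ?thesis unfolding red_rk s by (intro map_idI) (auto simp: s)
qed

(* Copies of a pattern only depend on the relative order of the letters,
   so a word of distinct letters and its reduction have the same copies. *)
lemma copy_at_red:
  assumes "distinct s"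
  shows "copy_at (red s) P idx \<longleftrightarrow> copy_at s P idx"
proof -
  have mono: "strict_mono_on (set s) (rk (set s))" by (rule rk_strict_mono) simp
  have "red (map (\<lambda>j. red s ! idx j) [0..<length (fst P)])
        = red (map (\<lambda>j. s ! idx j) [0..<length (fst P)])"
    if bound: "\<forall>j<length (fst P). idx j < length s"
  proof -
    define ws where "ws = map (\<lambda>j. s ! idx j) [0..<length (fst P)]"
    have e: "map (\<lambda>j. red s ! idx j) [0..<length (fst P)] = map (rk (set s)) ws"
      using bound by (simp add: ws_def red_rk del: red_def)
    have r: "red (map (rk (set s)) ws) = red ws"
      by (rule red_map_strict_mono[OF mono]) (use bound in \<open>auto simp: ws_def\<close>)
    show ?thesis unfolding e r by (simp only: ws_def)
  qed
  moreover have "length (red s) = length s" by (simp add: red_def)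
  ultimately show ?thesis unfolding copy_at_def Let_def by auto
qed

lemma idx_mono:
  assumes "\<forall>j. Suc j < l \<longrightarrow> (f::nat\<Rightarrow>nat) j < f (Suc j)" "a \<le> b" "b < l"
  shows "f a \<le> f b"
  using assms(2,3)
proof (induction b)
  case (Suc b)
  then show ?case using assms(1) by (cases "a = Suc b") (auto intro: order.trans less_imp_le)
qed simp

(* The order conditions survive since L is increasing; an adjacency condition
   survives as long as the two positions involved lie in a common prefix on which L
   is the identity, which is guaranteed when the whole head of the copy lies there. *)
lemma copy_at_lift:
  assumes L: "sorted_wrt (<) L" "\<forall>j\<in>set L. j < length \<pi>" "take k L = [0..<k]"
    and P: "valid_vpattern P"
    and cp: "copy_at (map (nth \<pi>) L) P idx"
    and head: "idx (head_last (snd P)) < k"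
  shows "copy_at \<pi> P (\<lambda>j. L ! idx j)"
proof -
  obtain \<sigma> X where PX: "P = (\<sigma>, X)" by fastforce
  define l where "l = length \<sigma>"
  have X: "X \<subseteq> {1..<l}" using P by (simp add: valid_vpattern_def PX l_def)
  have c1: "\<forall>j. Suc j < l \<longrightarrow> idx j < idx (Suc j)"
    and c2: "\<forall>j<l. idx j < length L"
    and c3: "red (map (\<lambda>j. map (nth \<pi>) L ! idx j) [0..<l]) = \<sigma>"
    and c4: "\<forall>x\<in>X. idx x = Suc (idx (x - 1))"
    using cp by (auto simp: copy_at_def Let_def PX l_def)
  have prefix: "L ! j = j" if "j < k" for j
    using that L(3) by (metis add_0 diff_zero length_take length_upt min_less_iff_conj nth_take nth_upt)
  show ?thesis
    unfolding copy_at_def Let_def PX fst_conv snd_conv l_def[symmetric]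
  proof (intro conjI allI impI ballI)
    fix j assume "Suc j < l"
    then show "L ! idx j < L ! idx (Suc j)"
      using c1 c2 L(1) by (simp add: sorted_wrt_nth_less)
  next
    fix j assume "j < l"
    then show "L ! idx j < length \<pi>" using c2 L(2) nth_mem by blast
  next
    have "map (\<lambda>j. map (nth \<pi>) L ! idx j) [0..<l] = map (\<lambda>j. \<pi> ! (L ! idx j)) [0..<l]"
      using c2 by simp
    then show "red (map (\<lambda>j. \<pi> ! (L ! idx j)) [0..<l]) = \<sigma>" using c3 by (simp only:)
  next
    fix x assume x: "x \<in> X"
    have fX: "finite X" using X finite_subset by blast
    have "x \<le> head_last X" "head_last X < l"
      using x X fX Max_in[OF fX] by (auto simp: head_last_def)
    then have "idx x \<le> idx (head_last X)" by (rule idx_mono[OF c1])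
    then have "idx x < k" using head PX by simp
    moreover have "idx (x - 1) < idx x" using c4 x by (metis lessI)
    ultimately show "L ! idx x = Suc (L ! idx (x - 1))" using prefix c4 x by simp
  qed
qed

lemma filter_eq_map_positions:
  "filter P xs = map (nth xs) (filter (\<lambda>j. P (xs ! j)) [0..<length xs])"
proof -
  have "filter P xs = filter P (map (nth xs) [0..<length xs])" by (simp add: map_nth)
  then show ?thesis by (simp add: filter_map comp_def)
qed

lemma take_filter_positions:
  assumes "k \<le> length xs" "\<forall>j<k. P (xs ! j)"
  shows "take k (filter (\<lambda>j. P (xs ! j)) [0..<length xs]) = [0..<k]"
proof -
  have "[0..<length xs] = [0..<k] @ [k..<length xs]"
    using assms(1) by (metis le_add_diff_inverse upt_add_eq_append zero_le)
  moreover have "filter (\<lambda>j. P (xs ! j)) [0..<k] = [0..<k]" using assms(2) by simp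
  ultimately show ?thesis by simp
qed

lemma contains_of_restriction:
  assumes \<pi>: "distinct \<pi>" "take k \<pi> = w" "length w = k" and V: "set w \<subseteq> V"
    and P: "valid_vpattern P"
    and copy: "copy_at (red (filter (\<lambda>x. x \<in> V) \<pi>)) P idx" and head: "idx (head_last (snd P)) < k"
  shows "contains \<pi> P"
proof -
  define L where "L = filter (\<lambda>j. \<pi> ! j \<in> V) [0..<length \<pi>]"
  have k: "k \<le> length \<pi>" using \<pi>(2,3) by (metis length_take min.bounded_iff order_refl)
  have prefix_in_V: "\<forall>j<k. \<pi> ! j \<in> V" using \<pi>(2,3) V by (metis nth_mem nth_take subsetD)
  have "filter (\<lambda>x. x \<in> V) \<pi> = map (nth \<pi>) L"
    unfolding L_def by (rule filter_eq_map_positions)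
  moreover have "copy_at (filter (\<lambda>x. x \<in> V) \<pi>) P idx"
    using copy copy_at_red[of "filter (\<lambda>x. x \<in> V) \<pi>"] \<pi>(1) by simp
  ultimately have "copy_at (map (nth \<pi>) L) P idx" by simp
  moreover have "sorted_wrt (<) L" by (simp add: L_def sorted_wrt_filter)
  moreover have "\<forall>j\<in>set L. j < length \<pi>" by (simp add: L_def)
  moreover have "take k L = [0..<k]" unfolding L_def using k prefix_in_V by (rule take_filter_positions)
  ultimately have "copy_at \<pi> P (\<lambda>j. L ! idx j)" using copy_at_lift P head by blast
  then show ?thesis by (auto simp: contains_def)
qed

(* A letter x outside w lies in gap number gap_index w x (0-indexed) of w, namely
   after exactly gap_index w x letters of w; gap_class n w i collects these letters. *)
definition gap_index :: "nat list \<Rightarrow> nat \<Rightarrow> nat" where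
  "gap_index w x = card {y\<in>set w. y < x}"

definition gap_class :: "nat \<Rightarrow> nat list \<Rightarrow> nat \<Rightarrow> nat set" where
  "gap_class n w i = {x\<in>{1..n} - set w. gap_index w x = i}"

lemma below_strict_sorted:
  fixes s :: "nat list"
  assumes s: "sorted_wrt (<) s" and x: "x \<notin> set s" and i: "i \<le> length s"
    and lo: "i = 0 \<or> s ! (i - 1) < x" and hi: "i = length s \<or> x < s ! i"
  shows "{y\<in>set s. y < x} = set (take i s)"
proof -
  have srt: "sorted s" using s strict_sorted_iff by blast
  show ?thesis
  proof (intro equalityI subsetI)
    fix y assume "y \<in> {y\<in>set s. y < x}"
    then obtain j where j: "j < length s" "s ! j = y" "y < x" by (auto simp: in_set_conv_nth)
    have "j < i"
    proof (rule ccontr)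
      assume "\<not> j < i"
      then have "i < length s" using j by simp
      moreover have "s ! i \<le> s ! j"
        using srt j \<open>\<not> j < i\<close> sorted_nth_mono[of s i j] by simp
      ultimately show False using hi j by simp
    qed
    then show "y \<in> set (take i s)" using j by (auto simp: in_set_conv_nth)
  next
    fix y assume "y \<in> set (take i s)"
    then obtain j where j: "j < i" "s ! j = y" using i by (auto simp: in_set_conv_nth)
    have "s ! j \<le> s ! (i - 1)"
      using srt j i sorted_nth_mono[of s j "i - 1"] by simp
    then show "y \<in> {y\<in>set s. y < x}" using j lo i nth_mem[of j s] by auto
  qed
qed

lemma card_below_strict_sorted_iff:
  fixes s :: "nat list"
  assumes s: "sorted_wrt (<) s" and x: "x \<notin> set s" and i: "i \<le> length s"
  shows "card {y\<in>set s. y < x} = i \<longleftrightarrow>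
         (i = 0 \<or> s ! (i - 1) < x) \<and> (i = length s \<or> x < s ! i)"
proof -
  have dist: "distinct s" using s strict_sorted_iff by blast
  have card_split: "card {y\<in>set s. y < x} = m"
    if "m \<le> length s" "m = 0 \<or> s ! (m - 1) < x" "m = length s \<or> x < s ! m" for m
    using below_strict_sorted[OF s x that] dist that(1) by (simp add: distinct_card)
  show ?thesis
  proof
    define m where "m = length (takeWhile (\<lambda>y. y < x) s)"
    have m: "m \<le> length s" by (simp add: m_def length_takeWhile_le)
    have m_lo: "m = 0 \<or> s ! (m - 1) < x"
    proof (cases "m = 0")
      case False
      then have "takeWhile (\<lambda>y. y < x) s ! (m - 1) \<in> set (takeWhile (\<lambda>y. y < x) s)"
        by (simp add: m_def)
      then show ?thesis using False takeWhile_nth[of "m - 1" "\<lambda>y. y < x" s] set_takeWhileD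
        by (fastforce simp: m_def)
    qed simp
    have m_hi: "m = length s \<or> x < s ! m"
    proof (cases "m = length s")
      case False
      then have "m < length s" "\<not> s ! m < x"
        using m nth_length_takeWhile[of "\<lambda>y. y < x" s] by (simp_all add: m_def)
      moreover have "s ! m \<noteq> x" using x nth_mem[OF \<open>m < length s\<close>] by auto
      ultimately show ?thesis by simp
    qed simp
    assume "card {y\<in>set s. y < x} = i"
    with card_split[OF m m_lo m_hi] have "m = i" by simp
    then show "(i = 0 \<or> s ! (i - 1) < x) \<and> (i = length s \<or> x < s ! i)"
      using m_lo m_hi by simp
  next
    assume "(i = 0 \<or> s ! (i - 1) < x) \<and> (i = length s \<or> x < s ! i)"
    then show "card {y\<in>set s. y < x} = i" using card_split[OF i] by (elim conjE)
  qed
qed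

lemma sorted_between_not_mem:
  fixes s :: "nat list"
  assumes s: "sorted s" and i: "i \<le> length s"
    and lo: "i = 0 \<or> s ! (i - 1) < x" and hi: "i = length s \<or> x < s ! i"
  shows "x \<notin> set s"
proof
  assume "x \<in> set s"
  then obtain j where j: "j < length s" "s ! j = x" by (auto simp: in_set_conv_nth)
  show False
  proof (cases "j < i")
    case True
    then have "s ! j \<le> s ! (i - 1)" using sorted_nth_mono[OF s, of j "i - 1"] i by simp
    then show False using lo True j by simp
  next
    case False
    then show False using s sorted_nth_mono[of s i j] hi j by auto
  qed
qed

lemma gap_index_le: "gap_index w x \<le> length w"
  using card_mono[of "set w" "{y\<in>set w. y < x}"] card_length[of w]
  by (simp add: gap_index_def)

lemma length_gapvec: "length (gapvec n w) = Suc (length w)"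
  by (simp add: gapvec_def Let_def)

(* The i-th component of the spacing vector counts the letters in the i-th gap: both equal
   the size of the open interval between consecutive letters lo < hi of 0, sort w, n+1. *)
lemma gapvec_nth:
  assumes dw: "distinct w" and sw: "set w \<subseteq> {1..n}" and i: "i \<le> length w"
  shows "gapvec n w ! i = card (gap_class n w i)"
proof -
  define s where "s = sort w"
  define lo where "lo = (if i = 0 then 0 else s ! (i - 1))"
  define hi where "hi = (if i = length s then Suc n else s ! i)"
  have ls: "length s = length w" and ss: "set s = set w" by (simp_all add: s_def)
  have st: "sorted_wrt (<) s" using dw by (simp add: s_def strict_sorted_iff)
  have srt: "sorted s" by (simp add: s_def)
  have gap: "gapvec n w ! i = hi - lo - 1"
    using i unfolding gapvec_def Let_def lo_def hi_def s_def
    by (cases "i = length w") (auto simp: nth_append nth_Cons')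
  have hi_le: "hi \<le> Suc n"
    using sw nth_mem[of i s] i ls ss by (fastforce simp: hi_def)
  have "gap_class n w i = {lo<..<hi}"
  proof (intro equalityI subsetI)
    fix x assume "x \<in> gap_class n w i"
    then have x: "x \<in> {1..n}" "x \<notin> set s" "card {y\<in>set s. y < x} = i"
      by (auto simp: gap_class_def gap_index_def ss)
    then show "x \<in> {lo<..<hi}"
      using card_below_strict_sorted_iff[OF st x(2)] i ls by (auto simp: lo_def hi_def)
  next
    fix x assume x: "x \<in> {lo<..<hi}"
    have "x \<notin> set s"
      using sorted_between_not_mem[OF srt, of i x] i ls x by (auto simp: lo_def hi_def split: if_splits)
    moreover have "card {y\<in>set s. y < x} = i"
      using card_below_strict_sorted_iff[OF st \<open>x \<notin> set s\<close>] i ls x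
      by (auto simp: lo_def hi_def split: if_splits)
    ultimately show "x \<in> gap_class n w i"
      using x hi_le by (auto simp: gap_class_def gap_index_def ss)
  qed
  then show ?thesis using gap by simp
qed

lemma gap_class_relabel:
  assumes V: "finite V" and w: "set w \<subseteq> V"
  shows "gap_class (card V) (map (rk V) w) i = rk V ` {x\<in>V - set w. gap_index w x = i}"
proof -
  have mono: "strict_mono_on V (rk V)" by (rule rk_strict_mono[OF V])
  have inj: "inj_on (rk V) V" by (rule strict_mono_on_imp_inj_on[OF mono])
  have index: "gap_index (map (rk V) w) (rk V x) = gap_index w x" if x: "x \<in> V" for x
  proof -
    have "{y\<in>set (map (rk V) w). y < rk V x} = rk V ` {y\<in>set w. y < x}"
      using strict_mono_on_less[OF mono] x w by (auto simp: image_iff subset_iff)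
    moreover have "inj_on (rk V) {y\<in>set w. y < x}" using inj w by (auto intro: inj_on_subset)
    ultimately show ?thesis by (simp add: card_image gap_index_def)
  qed
  have member: "rk V x \<in> set (map (rk V) w) \<longleftrightarrow> x \<in> set w" if "x \<in> V" for x
    using inj that w by (auto simp: inj_on_def subset_iff)
  show ?thesis
    unfolding gap_class_def rk_image[OF V, symmetric] using index member by auto
qed

lemma gapvec_relabel:
  assumes V: "finite V" and w: "distinct w" "set w \<subseteq> V"
  shows "gapvec (card V) (map (rk V) w)
         = map (\<lambda>i. card {x\<in>V - set w. gap_index w x = i}) [0..<Suc (length w)]"
proof (rule nth_equalityI)
  show "length (gapvec (card V) (map (rk V) w))
        = length (map (\<lambda>i. card {x\<in>V - set w. gap_index w x = i}) [0..<Suc (length w)])"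
    by (simp add: length_gapvec)
next
  fix i assume "i < length (gapvec (card V) (map (rk V) w))"
  then have i: "i \<le> length w" by (simp add: length_gapvec)
  have inj: "inj_on (rk V) V" by (rule strict_mono_on_imp_inj_on[OF rk_strict_mono[OF V]])
  have "distinct (map (rk V) w)" using w inj by (auto simp: distinct_map intro: inj_on_subset)
  moreover have "set (map (rk V) w) \<subseteq> {1..card V}" using rk_image[OF V] w(2) by auto
  ultimately have "gapvec (card V) (map (rk V) w) ! i = card (gap_class (card V) (map (rk V) w) i)"
    using i by (intro gapvec_nth) simp_all
  also have "\<dots> = card (rk V ` {x\<in>V - set w. gap_index w x = i})"
    by (simp add: gap_class_relabel[OF V w(2)])
  also have "\<dots> = card {x\<in>V - set w. gap_index w x = i}"
    using inj by (intro card_image) (auto intro: inj_on_subset)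
  finally show "gapvec (card V) (map (rk V) w) ! i
                = map (\<lambda>i. card {x\<in>V - set w. gap_index w x = i}) [0..<Suc (length w)] ! i"
    using i by (simp del: upt_Suc)
qed

lemma choose_by_class:
  fixes f :: "'a \<Rightarrow> nat"
  assumes U: "finite U" and v: "\<forall>i<length v. v ! i \<le> card {x\<in>U. f x = i}"
  shows "\<exists>T\<subseteq>U. (\<forall>x\<in>T. f x < length v) \<and> (\<forall>i<length v. card {x\<in>T. f x = i} = v ! i)"
proof -
  have "\<forall>i. \<exists>S. i < length v \<longrightarrow> S \<subseteq> {x\<in>U. f x = i} \<and> card S = v ! i"
    using v by (meson obtain_subset_with_card_n)
  then obtain S where S: "\<And>i. i < length v \<Longrightarrow> S i \<subseteq> {x\<in>U. f x = i} \<and> card (S i) = v ! i"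
    by metis
  define T where "T = (\<Union>i<length v. S i)"
  have fibre: "{x\<in>T. f x = i} = S i" if i: "i < length v" for i
  proof (intro equalityI subsetI)
    fix x assume "x \<in> {x\<in>T. f x = i}"
    then obtain j where "j < length v" "x \<in> S j" "f x = i" by (auto simp: T_def)
    then show "x \<in> S i" using S[of j] by auto
  next
    fix x assume "x \<in> S i"
    then show "x \<in> {x\<in>T. f x = i}" using S[OF i] i by (auto simp: T_def)
  qed
  have "T \<subseteq> U" "\<forall>x\<in>T. f x < length v" using S by (auto simp: T_def)
  then show ?thesis using fibre S by (intro exI[of _ T]) simp
qed

lemma card_by_class:
  fixes f :: "'a \<Rightarrow> nat"
  assumes "finite T" "\<forall>x\<in>T. f x < m"
  shows "card T = (\<Sum>i<m. card {x\<in>T. f x = i})"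
proof -
  have "(\<Sum>i<m. \<Sum>x\<in>{x\<in>T. f x = i}. 1) = (\<Sum>x\<in>T. 1::nat)"
    by (rule sum.group) (use assms in auto)
  then show ?thesis by simp
qed

lemma restriction_in_A_set:
  assumes \<pi>: "\<pi> \<in> permutations_of_set {1..n}" and w: "take k \<pi> = w" "length w = k"
    and p: "p \<in> permutations_of_set {1..k}" "red w = p"
    and T: "T \<subseteq> {1..n} - set w" and v: "length v = Suc k"
    and fibres: "\<forall>i<Suc k. card {x\<in>T. gap_index w x = i} = v ! i"
  shows "red (filter (\<lambda>x. x \<in> set w \<union> T) \<pi>) \<in> A_set p v"
proof -
  define V where "V = set w \<union> T"
  define s where "s = filter (\<lambda>x. x \<in> V) \<pi>"
  have d\<pi>: "distinct \<pi>" and s\<pi>: "set \<pi> = {1..n}" using permutations_of_setD[OF \<pi>] by auto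
  have sw: "set w \<subseteq> {1..n}" and dw: "distinct w"
    using w(1) s\<pi> d\<pi> set_take_subset[of k \<pi>] by auto
  have finT: "finite T" and finV: "finite V" using T by (auto simp: V_def intro: finite_subset)
  have ds: "distinct s" and ss: "set s = V" using d\<pi> s\<pi> T sw by (auto simp: s_def V_def)
  have take_s: "take k s = w"
  proof -
    have "\<pi> = w @ drop k \<pi>" using w(1) by (metis append_take_drop_id)
    then have "s = w @ filter (\<lambda>x. x \<in> V) (drop k \<pi>)"
      unfolding s_def by (metis V_def UnCI filter_True filter_append)
    then show ?thesis using w(2) by simp
  qed
  have "card T = (\<Sum>i<Suc k. card {x\<in>T. gap_index w x = i})"
    using finT gap_index_le[of w] w(2) by (intro card_by_class) (auto simp: less_Suc_eq_le)
  also have "\<dots> = sum_list v" using fibres v by (simp add: sum_list_sum_nth lessThan_atLeast0)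
  finally have card_V: "card V = k + sum_list v"
    using card_Un_disjoint[of "set w" T] finT T distinct_card[OF dw] w(2) by (auto simp: V_def)
  have take_red: "take k (red s) = map (rk V) w"
    by (simp add: red_rk take_map take_s ss del: red_def)
  have prefix: "red (take k (red s)) = red p"
    using red_map_strict_mono[OF rk_strict_mono[OF finV], of w] red_id[OF p(1)] p(2) take_red
    by (simp add: V_def del: red_def)
  have "V - set w = T" using T by (auto simp: V_def)
  then have "map (\<lambda>i. card {x\<in>V - set w. gap_index w x = i}) [0..<Suc k] = v"
    using fibres v by (intro nth_equalityI) (simp_all del: upt_Suc)
  then have "gapvec (card V) (take k (red s)) = v"
    using gapvec_relabel[OF finV dw] take_red w(2) by (simp add: V_def del: upt_Suc)
  then show ?thesis
    using red_perm[OF ds] distinct_card[OF ds] ss card_V prefix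
      length_finite_permutations_of_set[OF p(1)]
    by (simp add: A_set_def s_def V_def del: red_def)
qed

theorem mainTheorem1:
  fixes B :: "vpattern set" and p v :: "nat list" and k :: nat
  assumes "finite B"
    and "\<forall>P\<in>B. valid_vpattern P"
    and "p \<in> permutations_of_set {1..k}"
    and "length v = Suc k"
    and "\<forall>\<pi>\<in>A_set p v. \<exists>P\<in>B. \<exists>idx. copy_at \<pi> P idx \<and> idx (head_last (snd P)) < k"
  shows "gap_vector p B v"
  unfolding gap_vector_def
proof (intro allI impI)
  fix n w
  assume "length w = length p \<and> distinct w \<and> set w \<subseteq> {1..n} \<and> red w = p \<and>
          list_all2 (\<le>) v (gapvec n w)"
  with length_finite_permutations_of_set[OF assms(3)]
  have w: "length w = k" "distinct w" "set w \<subseteq> {1..n}" "red w = p"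
    and dominated: "list_all2 (\<le>) v (gapvec n w)" by auto
  show "S_restr n B p w = {}"
  proof (rule ccontr)
    assume "S_restr n B p w \<noteq> {}"
    then obtain \<pi> where \<pi>: "\<pi> \<in> permutations_of_set {1..n}" "avoids \<pi> B" "take k \<pi> = w"
      using w(1) length_finite_permutations_of_set[OF assms(3)] by (auto simp: S_restr_def)
    have "\<forall>i<length v. v ! i \<le> card (gap_class n w i)"
      using dominated gapvec_nth[OF w(2,3)] assms(4) w(1) by (auto simp: list_all2_conv_all_nth)
    then obtain T where T: "T \<subseteq> {1..n} - set w"
      and fibres: "\<forall>i<Suc k. card {x\<in>T. gap_index w x = i} = v ! i"
      using choose_by_class[of "{1..n} - set w" v "gap_index w"] assms(4) by (auto simp: gap_class_def)
    have "red (filter (\<lambda>x. x \<in> set w \<union> T) \<pi>) \<in> A_set p v"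
      using restriction_in_A_set[OF \<pi>(1,3) w(1) assms(3) w(4) T assms(4) fibres] .
    then obtain P idx where "P \<in> B" "idx (head_last (snd P)) < k"
      and "copy_at (red (filter (\<lambda>x. x \<in> set w \<union> T) \<pi>)) P idx"
      using assms(5) by blast
    then have "contains \<pi> P"
      using contains_of_restriction[OF _ \<pi>(3) w(1)] permutations_of_setD(2)[OF \<pi>(1)] assms(2)
      by blast
    then show False using \<pi>(2) \<open>P \<in> B\<close> by (auto simp: avoids_def)
  qed
qed

end
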